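(* Let $p>1$, $1/p+1/q=1$, let $\{(x_i,y_i)\}_{i=1}^n\subset\mathbb{R}^d\times\{\pm1\}$ be linearly separable with $\max_i\|x_i\|_q\le C$, and let $L(w)=\frac1n\sum_i\exp(-y_i\langle w,x_i\rangle)$ (exponential loss). Let $w_t$ be the iterates of $p$-GD with step size $\eta$ small enough that $\psi-\eta L$ is convex (at least locally at the iterates). Then $\|w_t\|_p\in\Theta(\log t)$; more precisely, $$\|w_t\|_p\ge\frac1C\left(\log t-p\log\log t\right)+O(1)\quad\text{as }t\to\infty,\qquad \limsup_{t\to\infty}\frac{\|w_t\|_p}{\log t}\le\hat\gamma_p^{-1}\frac{p}{p-1}.$$
   Context: $\psi(w)=\frac1p\|w\|_p^p$; $p$-GD is the iteration $\nabla\psi(w_{t+1})=\nabla\psi(w_t)-\eta\nabla L(w_t)$ from some initialization $w_0$. The max-margin direction is $\bar w^{\mathrm{mm}}_p=\arg\max_{\|w\|_p\le1}\min_i y_i\langle x_i,w\rangle$ and $\hat\gamma_p>0$ is the optimal value of this maximization (the max margin). *)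

theory Defs
  imports "HOL-Analysis.Analysis"
begin

definition pnorm :: "real \<Rightarrow> real^'d \<Rightarrow> real" where
  "pnorm p w = (\<Sum>j\<in>UNIV. \<bar>w $ j\<bar> powr p) powr (1 / p)"

definition psi :: "real \<Rightarrow> real^'d \<Rightarrow> real" where
  "psi p w = (1 / p) * (\<Sum>j\<in>UNIV. \<bar>w $ j\<bar> powr p)"

definition grad_psi :: "real \<Rightarrow> real^'d \<Rightarrow> real^'d" where
  "grad_psi p w = (\<chi> j. sgn (w $ j) * \<bar>w $ j\<bar> powr (p - 1))"

definition exp_loss :: "nat \<Rightarrow> (nat \<Rightarrow> real^'d) \<Rightarrow> (nat \<Rightarrow> real) \<Rightarrow> real^'d \<Rightarrow> real" where
  "exp_loss n x y w = (1 / real n) * (\<Sum>i<n. exp (- y i * (w \<bullet> x i)))"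

definition grad_exp_loss :: "nat \<Rightarrow> (nat \<Rightarrow> real^'d) \<Rightarrow> (nat \<Rightarrow> real) \<Rightarrow> real^'d \<Rightarrow> real^'d" where
  "grad_exp_loss n x y w = - ((1 / real n) *\<^sub>R (\<Sum>i<n. (exp (- y i * (w \<bullet> x i)) * y i) *\<^sub>R x i))"

definition max_margin :: "real \<Rightarrow> nat \<Rightarrow> (nat \<Rightarrow> real^'d) \<Rightarrow> (nat \<Rightarrow> real) \<Rightarrow> real" where
  "max_margin p n x y = (SUP w\<in>{w. pnorm p w \<le> 1}. (MIN i\<in>{..<n}. y i * (x i \<bullet> w)))"

end

(*
  Mirror descent with potential psi = ||.||_p^p / p satisfies, whenever psi - eta L is convex
  between consecutive iterates, the Bregman recursion
    D(u, w_(t+1)) <= D(u, w_t) + eta (L(u) - L(w_(t+1))),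
  and L decreases along the iterates, so telescoping gives
    D(u, w_t) + eta t L(w_t) <= D(u, w_0) + eta t L(u)   for every comparator u.
  Take u = r m with ||m||_p <= 1 of margin gamma > 0 and r = ln t / gamma, so that t L(u) <= 1.

  Lower bound: D >= 0 gives L(w_t) = O((ln t)^p / t), while Hoelder gives L(w) >= exp(-C ||w||_p) / n.
  Upper bound: psi(u) cancels from D(u, w_t) - D(u, w_0), and ||grad psi(w)||_q = ||w||_p^(p-1), so
  N = ||w_t||_p satisfies (1 - 1/p) N^p - r N^(p-1) = O(r); this forces N <= kappa r for every
  kappa > p/(p-1).  Letting the margin of m approach the max margin gives the limsup bound.
*)

theory Submission
  imports Defs
begin

section \<open>The l_p norm and the mirror potential\<close>

lemma conjugate_exponent_gt_one:
  fixes p q :: real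
  assumes "p > 1" and "1 / p + 1 / q = 1"
  shows "q > 1"
proof -
  have "1 / q = 1 - 1 / p" using assms(2) by linarith
  moreover have "0 < 1 / p" "1 / p < 1" using assms(1) by auto
  ultimately have "0 < 1 / q" "1 / q < 1" by linarith+
  then show ?thesis by (auto simp: divide_less_eq_1)
qed

lemma pnorm_nonneg: "pnorm p w \<ge> 0"
  unfolding pnorm_def by simp

lemma pnorm_powr_eq_sum: "p > 0 \<Longrightarrow> pnorm p w powr p = (\<Sum>j\<in>UNIV. \<bar>w $ j\<bar> powr p)"
  unfolding pnorm_def by (simp add: powr_powr sum_nonneg)

lemma pnorm_eq_0_iff: "pnorm p w = 0 \<longleftrightarrow> w = 0"
proof -
  have "pnorm p w = 0 \<longleftrightarrow> (\<forall>j\<in>UNIV. \<bar>w $ j\<bar> powr p = 0)"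
    unfolding pnorm_def by (simp add: sum_nonneg_eq_0_iff)
  then show ?thesis by (simp add: vec_eq_iff)
qed

lemma pnorm_scaleR: "p > 0 \<Longrightarrow> pnorm p (c *\<^sub>R w) = \<bar>c\<bar> * pnorm p w"
  unfolding pnorm_def
  by (simp add: abs_mult powr_mult sum_distrib_left[symmetric] sum_nonneg powr_powr)

lemma psi_eq_pnorm_powr: "p > 0 \<Longrightarrow> psi p w = pnorm p w powr p / p"
  by (simp add: psi_def pnorm_powr_eq_sum)

lemma psi_scaleR_le:
  assumes p: "p > 1" and r: "r \<ge> 0" and m: "pnorm p m \<le> 1"
  shows "psi p (r *\<^sub>R m) \<le> r powr p / p"
proof -
  have "(r * pnorm p m) powr p \<le> r powr p"
    using p r m pnorm_nonneg[of p m] by (intro powr_mono2) (auto simp: mult_left_le)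
  then show ?thesis using p r by (simp add: psi_eq_pnorm_powr pnorm_scaleR divide_right_mono)
qed

lemma abs_inner_le_pnorm_mult:
  fixes a b :: "real^'d"
  assumes p: "p > 1" and q: "q > 1" and pq: "1/p + 1/q = 1"
  shows "\<bar>a \<bullet> b\<bar> \<le> pnorm p a * pnorm q b"
proof (cases "a = 0 \<or> b = 0")
  case True
  then show ?thesis by (auto simp: pnorm_nonneg)
next
  case False
  define A B where "A = pnorm p a" and "B = pnorm q b"
  have A: "A > 0" and B: "B > 0"
    using False pnorm_nonneg pnorm_eq_0_iff by (auto simp: A_def B_def order_less_le)
  have "\<bar>a \<bullet> b\<bar> \<le> (\<Sum>j\<in>UNIV. \<bar>a $ j\<bar> * \<bar>b $ j\<bar>)"
    unfolding inner_vec_def by (rule order_trans[OF sum_abs]) (simp add: abs_mult)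
  also have "\<dots> = A * B * (\<Sum>j\<in>UNIV. (\<bar>a $ j\<bar> / A) * (\<bar>b $ j\<bar> / B))"
    using A B by (simp add: sum_distrib_left)
  also have "\<dots> \<le> A * B * (\<Sum>j\<in>UNIV. (\<bar>a $ j\<bar> / A) powr p / p + (\<bar>b $ j\<bar> / B) powr q / q)"
    using A B by (intro mult_left_mono sum_mono Youngs_inequality p q pq) auto
  also have "\<dots> = A * B * ((\<Sum>j\<in>UNIV. \<bar>a $ j\<bar> powr p) / A powr p / p
                          + (\<Sum>j\<in>UNIV. \<bar>b $ j\<bar> powr q) / B powr q / q)"
    using A B by (simp add: powr_divide sum.distrib sum_divide_distrib)
  also have "\<dots> = A * B"
    using A B p q pq by (simp add: A_def B_def flip: pnorm_powr_eq_sum)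
  finally show ?thesis by (simp add: A_def B_def)
qed

lemma sgn_mult_abs_powr_diff_one: "sgn (b::real) * \<bar>b\<bar> powr (p - 1) * b = \<bar>b\<bar> powr p"
proof -
  have "sgn b * b = \<bar>b\<bar>" by (simp add: sgn_if)
  then have "sgn b * \<bar>b\<bar> powr (p - 1) * b = \<bar>b\<bar> * \<bar>b\<bar> powr (p - 1)"
    by (simp add: mult_ac)
  also have "\<dots> = \<bar>b\<bar> powr p" by (simp add: powr_mult_base)
  finally show ?thesis .
qed

lemma grad_psi_inner_self: "p > 0 \<Longrightarrow> grad_psi p w \<bullet> w = pnorm p w powr p"
  by (simp add: grad_psi_def inner_vec_def pnorm_powr_eq_sum sgn_mult_abs_powr_diff_one)

lemma pnorm_grad_psi:
  assumes p: "p > 1"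
  shows "pnorm (p / (p - 1)) (grad_psi p w) = pnorm p w powr (p - 1)"
proof -
  have "\<bar>grad_psi p w $ j\<bar> powr (p / (p - 1)) = \<bar>w $ j\<bar> powr p" for j
    using p by (simp add: grad_psi_def abs_mult powr_powr)
  then have "pnorm (p / (p - 1)) (grad_psi p w) = (\<Sum>j\<in>UNIV. \<bar>w $ j\<bar> powr p) powr ((p - 1) / p)"
    by (simp add: pnorm_def)
  also have "\<dots> = (pnorm p w powr p) powr ((p - 1) / p)"
    using p by (simp add: pnorm_powr_eq_sum)
  also have "\<dots> = pnorm p w powr (p - 1)" using p by (simp add: powr_powr)
  finally show ?thesis .
qed

lemma grad_psi_inner_le:
  assumes p: "p > 1"
  shows "grad_psi p w \<bullet> v \<le> pnorm p w powr (p - 1) * pnorm p v"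
proof -
  have "p / (p - 1) > 1" and "1 / (p / (p - 1)) + 1 / p = 1" using p by (auto simp: field_simps)
  then have "\<bar>grad_psi p w \<bullet> v\<bar> \<le> pnorm (p / (p - 1)) (grad_psi p w) * pnorm p v"
    using p by (intro abs_inner_le_pnorm_mult)
  then show ?thesis using p by (simp add: pnorm_grad_psi)
qed

text \<open>Hoelder reduces the tangent inequality of psi to Young's inequality
  N_w^(p-1) N_v <= (1 - 1/p) N_w^p + N_v^p / p for the norms alone.\<close>

lemma psi_above_tangent:
  assumes p: "p > 1"
  shows "psi p w + grad_psi p w \<bullet> (v - w) \<le> psi p v"
proof -
  define Nw Nv where "Nw = pnorm p w" and "Nv = pnorm p v"
  have q: "p / (p - 1) > 1" and pq: "1 / (p / (p - 1)) + 1 / p = 1" using p by (auto simp: field_simps)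
  have "Nw powr (p - 1) * Nv \<le> (Nw powr (p - 1)) powr (p / (p - 1)) / (p / (p - 1)) + Nv powr p / p"
    by (rule Youngs_inequality[OF q p pq]) (auto simp: Nv_def pnorm_nonneg)
  also have "(Nw powr (p - 1)) powr (p / (p - 1)) = Nw powr p"
    using p by (simp add: powr_powr)
  finally have young: "Nw powr (p - 1) * Nv \<le> (1 - 1 / p) * Nw powr p + Nv powr p / p"
    using p by (simp add: field_simps)
  have "psi p w + grad_psi p w \<bullet> (v - w) = Nw powr p / p - Nw powr p + grad_psi p w \<bullet> v"
    using p by (simp add: Nw_def psi_eq_pnorm_powr grad_psi_inner_self inner_diff_right)
  also have "\<dots> \<le> Nw powr p / p - Nw powr p + Nw powr (p - 1) * Nv"
    using grad_psi_inner_le[OF p] by (simp add: Nw_def Nv_def)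
  also have "\<dots> \<le> Nv powr p / p"
    using young by (simp add: algebra_simps)
  finally show ?thesis using p by (simp add: Nv_def psi_eq_pnorm_powr)
qed

lemma has_real_derivative_abs_powr:
  fixes p :: real
  assumes p: "p > 1"
  shows "((\<lambda>x. \<bar>x\<bar> powr p) has_real_derivative p * (sgn x * \<bar>x\<bar> powr (p - 1))) (at x)"
proof (cases x "0::real" rule: linorder_cases)
  case greater
  have "((\<lambda>x. x powr p) has_real_derivative p * (sgn x * \<bar>x\<bar> powr (p - 1))) (at x)"
    using greater by (auto intro!: derivative_eq_intros)
  then show ?thesis
    by (rule has_field_derivative_transform_within_open[where S="{0<..}"]) (use greater in auto)
next
  case less
  have "((\<lambda>x. (- x) powr p) has_real_derivative p * (sgn x * \<bar>x\<bar> powr (p - 1))) (at x)"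
    using less by (auto intro!: derivative_eq_intros)
  then show ?thesis
    by (rule has_field_derivative_transform_within_open[where S="{..<0}"]) (use less in auto)
next
  case equal
  have "(abs \<longlongrightarrow> 0) (at (0::real))"
    using tendsto_rabs[OF tendsto_ident_at[of "0::real" UNIV]] by simp
  then have "((\<lambda>h. \<bar>h\<bar> powr (p - 1)) \<longlongrightarrow> 0 powr (p - 1)) (at (0::real))"
    using p by (intro tendsto_intros) auto
  then have "((\<lambda>h. \<bar>h\<bar> powr (p - 1)) \<longlongrightarrow> 0) (at (0::real))"
    using p by simp
  moreover have "\<forall>\<^sub>F h in at 0. \<bar>h\<bar> powr (p - 1) = norm (\<bar>h\<bar> powr p / h)"
    using p by (auto simp: eventually_at_filter powr_diff abs_divide)
  ultimately have "((\<lambda>h. norm (\<bar>h\<bar> powr p / h)) \<longlongrightarrow> 0) (at (0::real))"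
    by (rule Lim_transform_eventually)
  then have "((\<lambda>h. \<bar>h\<bar> powr p / h) \<longlongrightarrow> 0) (at (0::real))"
    by (rule tendsto_norm_zero_cancel)
  then show ?thesis
    using equal p by (simp add: has_field_derivative_iff)
qed

lemma psi_has_derivative:
  assumes p: "p > 1"
  shows "(psi p has_derivative (\<lambda>h. grad_psi p w \<bullet> h)) (at w)"
proof -
  have "((\<lambda>v. \<bar>v $ j\<bar> powr p) has_derivative (\<lambda>h. h $ j * (p * (sgn (w $ j) * \<bar>w $ j\<bar> powr (p - 1))))) (at w)"
    for j
    using has_derivative_compose[OF bounded_linear.has_derivative[OF bounded_linear_vec_nth has_derivative_ident]
        has_real_derivative_abs_powr[OF p, of "w $ j", unfolded has_field_derivative_def]]
    by (simp add: mult.commute)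
  then have "(psi p has_derivative
      (\<lambda>h. (1/p) * (\<Sum>j\<in>UNIV. h $ j * (p * (sgn (w $ j) * \<bar>w $ j\<bar> powr (p - 1)))))) (at w)"
    unfolding psi_def[abs_def] by (intro has_derivative_mult_right has_derivative_sum)
  moreover have "(\<lambda>h. (1/p) * (\<Sum>j\<in>UNIV. h $ j * (p * (sgn (w $ j) * \<bar>w $ j\<bar> powr (p - 1)))))
      = (\<lambda>h. grad_psi p w \<bullet> h)"
    using p by (auto simp: grad_psi_def inner_vec_def sum_distrib_left intro!: sum.cong)
  ultimately show ?thesis by simp
qed

section \<open>Exponential loss and margins\<close>

lemma exp_loss_nonneg: "exp_loss n x y w \<ge> 0"
  by (simp add: exp_loss_def sum_nonneg)

lemma grad_exp_loss_inner:
  "grad_exp_loss n x y w \<bullet> h = (1 / real n) * (\<Sum>i<n. exp (- y i * (w \<bullet> x i)) * (- y i * (h \<bullet> x i)))"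
  by (simp add: grad_exp_loss_def inner_sum_left sum_negf sum_distrib_left mult_ac inner_commute[of "x _" h])

lemma exp_loss_has_derivative:
  "(exp_loss n x y has_derivative (\<lambda>h. grad_exp_loss n x y w \<bullet> h)) (at w)"
  unfolding exp_loss_def[abs_def] grad_exp_loss_inner
  by (intro has_derivative_mult_right has_derivative_sum) (auto intro!: derivative_eq_intros)

lemma exp_loss_above_tangent:
  "exp_loss n x y w + grad_exp_loss n x y w \<bullet> (v - w) \<le> exp_loss n x y v"
proof -
  have "exp (- y i * (w \<bullet> x i)) + exp (- y i * (w \<bullet> x i)) * (- y i * ((v - w) \<bullet> x i))
      \<le> exp (- y i * (v \<bullet> x i))" for i
  proof -
    have "exp (- y i * (w \<bullet> x i)) * (1 + (- y i * ((v - w) \<bullet> x i)))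
        \<le> exp (- y i * (w \<bullet> x i)) * exp (- y i * ((v - w) \<bullet> x i))"
      by (intro mult_left_mono exp_ge_add_one_self) simp
    also have "\<dots> = exp (- y i * (v \<bullet> x i))"
      by (simp add: mult_exp_exp inner_diff_left algebra_simps)
    finally show ?thesis by (simp add: algebra_simps)
  qed
  then have "(1 / real n) * (\<Sum>i<n. exp (- y i * (w \<bullet> x i))
                  + exp (- y i * (w \<bullet> x i)) * (- y i * ((v - w) \<bullet> x i)))
      \<le> (1 / real n) * (\<Sum>i<n. exp (- y i * (v \<bullet> x i)))"
    by (intro mult_left_mono sum_mono) simp_all
  then show ?thesis
    unfolding exp_loss_def grad_exp_loss_inner distrib_left[symmetric] sum.distrib[symmetric] .
qed

lemma exp_loss_ge_exp_pnorm:
  assumes p: "p > 1" and q: "q > 1" and pq: "1/p + 1/q = 1"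
    and n: "n > 0" and labels: "\<forall>i<n. y i \<in> {-1, 1}" and bounded: "\<forall>i<n. pnorm q (x i) \<le> C"
  shows "exp (- C * pnorm p w) / real n \<le> exp_loss n x y w"
proof -
  have "\<bar>w \<bullet> x 0\<bar> \<le> pnorm p w * pnorm q (x 0)" by (rule abs_inner_le_pnorm_mult[OF p q pq])
  also have "\<dots> \<le> pnorm p w * C" using bounded n by (intro mult_left_mono) (auto simp: pnorm_nonneg)
  finally have "exp (- C * pnorm p w) \<le> exp (- y 0 * (w \<bullet> x 0))"
    using labels n by (auto simp: mult.commute)
  also have "\<dots> \<le> (\<Sum>i<n. exp (- y i * (w \<bullet> x i)))"
    using n by (intro member_le_sum) auto
  finally show ?thesis by (simp add: exp_loss_def divide_right_mono)
qed

definition margin :: "nat \<Rightarrow> (nat \<Rightarrow> real^'d) \<Rightarrow> (nat \<Rightarrow> real) \<Rightarrow> real^'d \<Rightarrow> real" where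
  "margin n x y m = (MIN i\<in>{..<n}. y i * (x i \<bullet> m))"

lemma exp_loss_scaleR_le_inverse:
  assumes n: "n > 0" and r: "r \<ge> 0" and s: "s > 0" and ln_le: "ln s \<le> r * margin n x y m"
  shows "exp_loss n x y (r *\<^sub>R m) \<le> 1 / s"
proof -
  have "exp (- y i * ((r *\<^sub>R m) \<bullet> x i)) \<le> 1 / s" if "i < n" for i
  proof -
    have "margin n x y m \<le> y i * (x i \<bullet> m)" unfolding margin_def using that by (intro Min_le) auto
    then have "ln s \<le> r * (y i * (x i \<bullet> m))" using ln_le r by (meson mult_left_mono order_trans)
    then have "exp (- y i * ((r *\<^sub>R m) \<bullet> x i)) \<le> exp (- ln s)"
      by (simp add: inner_commute mult_ac)
    also have "\<dots> = 1 / s" using s by (simp add: exp_minus inverse_eq_divide)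
    finally show ?thesis .
  qed
  then have "(\<Sum>i<n. exp (- y i * ((r *\<^sub>R m) \<bullet> x i))) \<le> (\<Sum>i<n. 1 / s)"
    by (intro sum_mono) simp
  then show ?thesis using n by (simp add: exp_loss_def field_simps)
qed

lemma exists_unit_margin_pos:
  assumes p: "p > 0" and n: "n > 0" and separable: "\<exists>u. \<forall>i<n. y i * (u \<bullet> x i) > 0"
  shows "\<exists>m. pnorm p m \<le> 1 \<and> margin n x y m > 0"
proof -
  obtain u where u: "\<forall>i<n. y i * (u \<bullet> x i) > 0" using separable by blast
  have "u \<noteq> 0" using u n by auto
  then have u_norm: "pnorm p u > 0" using pnorm_eq_0_iff[of p u] pnorm_nonneg[of p u] by linarith
  define m where "m = (1 / pnorm p u) *\<^sub>R u"
  have "pnorm p m = 1" using p u_norm by (simp add: m_def pnorm_scaleR)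
  moreover have "margin n x y m > 0"
    unfolding margin_def using n u u_norm by (subst Min_gr_iff) (auto simp: m_def inner_commute)
  ultimately show ?thesis by (intro exI[of _ m]) simp
qed

lemma margin_le_of_pnorm_le:
  assumes p: "p > 1" and q: "q > 1" and pq: "1/p + 1/q = 1"
    and n: "n > 0" and labels: "\<forall>i<n. y i \<in> {-1, 1}" and bounded: "\<forall>i<n. pnorm q (x i) \<le> C"
    and m: "pnorm p m \<le> 1"
  shows "margin n x y m \<le> C"
proof -
  have "margin n x y m \<le> y 0 * (x 0 \<bullet> m)" unfolding margin_def using n by (intro Min_le) auto
  also have "\<dots> \<le> \<bar>m \<bullet> x 0\<bar>" using labels n by (auto simp: inner_commute)
  also have "\<dots> \<le> pnorm p m * pnorm q (x 0)" by (rule abs_inner_le_pnorm_mult[OF p q pq])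
  also have "\<dots> \<le> 1 * C"
    using m bounded n by (intro mult_mono) (auto simp: pnorm_nonneg)
  finally show ?thesis by simp
qed

lemma max_margin_eq_SUP_margin:
  "max_margin p n x y = (SUP m\<in>{m. pnorm p m \<le> 1}. margin n x y m)"
  by (simp add: max_margin_def margin_def)

lemma
  fixes x :: "nat \<Rightarrow> real^'d" and m :: "real^'d"
  assumes p: "p > 1" and q: "q > 1" and pq: "1/p + 1/q = 1"
    and n: "n > 0" and labels: "\<forall>i<n. y i \<in> {-1, 1}" and bounded: "\<forall>i<n. pnorm q (x i) \<le> C"
  shows margin_le_max_margin: "pnorm p m \<le> 1 \<Longrightarrow> margin n x y m \<le> max_margin p n x y"
    and exists_margin_gt: "\<gamma> < max_margin p n x y \<Longrightarrow> \<exists>m. pnorm p m \<le> 1 \<and> \<gamma> < margin n x y m"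
proof -
  have bdd: "bdd_above (margin n x y ` {m. pnorm p m \<le> 1})"
    using margin_le_of_pnorm_le[OF assms] by (intro bdd_aboveI2) auto
  show "pnorm p m \<le> 1 \<Longrightarrow> margin n x y m \<le> max_margin p n x y"
    unfolding max_margin_eq_SUP_margin by (rule cSUP_upper[OF _ bdd]) simp
  have "(0::real^'d) \<in> {m. pnorm p m \<le> 1}" using pnorm_eq_0_iff[of p "0::real^'d"] by simp
  then show "\<gamma> < max_margin p n x y \<Longrightarrow> \<exists>m. pnorm p m \<le> 1 \<and> \<gamma> < margin n x y m"
    unfolding max_margin_eq_SUP_margin by (subst (asm) less_cSUP_iff[OF _ bdd]) auto
qed

section \<open>Mirror descent\<close>

definition bregman :: "('a::real_inner \<Rightarrow> real) \<Rightarrow> ('a \<Rightarrow> 'a) \<Rightarrow> 'a \<Rightarrow> 'a \<Rightarrow> real" where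
  "bregman f Df u v = f u - f v - Df v \<bullet> (u - v)"

lemma bregman_scaleR_le:
  assumes "r \<ge> 0"
  shows "bregman f Df (r *\<^sub>R m) v \<le> f (r *\<^sub>R m) + (Df v \<bullet> v - f v) + r * \<bar>Df v \<bullet> m\<bar>"
proof -
  have "r * - (Df v \<bullet> m) \<le> r * \<bar>Df v \<bullet> m\<bar>" using assms by (intro mult_left_mono) auto
  then show ?thesis by (simp add: bregman_def inner_diff_right)
qed

lemma convex_on_closed_segment_above_tangent:
  fixes f :: "'a::real_normed_vector \<Rightarrow> real"
  assumes convex: "convex_on (closed_segment a b) f"
    and deriv: "(f has_derivative f') (at a)"
  shows "f a + f' (b - a) \<le> f b"
proof -
  define g where "g s = f (a + s *\<^sub>R (b - a))" for s :: real
  have "((\<lambda>s. a + s *\<^sub>R (b - a)) has_derivative (\<lambda>s. s *\<^sub>R (b - a))) (at 0)"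
    by (auto intro!: derivative_eq_intros)
  from has_derivative_compose[OF this] deriv
  have "(g has_derivative (\<lambda>s. f' (s *\<^sub>R (b - a)))) (at 0)"
    unfolding g_def by simp
  moreover have "(\<lambda>s. f' (s *\<^sub>R (b - a))) = (*) (f' (b - a))"
    using has_derivative_linear[OF deriv] by (auto simp: linear.scaleR mult.commute)
  ultimately have "(g has_real_derivative f' (b - a)) (at 0)"
    by (simp add: has_field_derivative_def)
  then have "((\<lambda>s. (g s - g 0) / s) \<longlongrightarrow> f' (b - a)) (at 0)"
    by (simp add: has_field_derivative_iff)
  then have "((\<lambda>s. (g s - g 0) / s) \<longlongrightarrow> f' (b - a)) (at_right 0)"
    by (rule filterlim_mono) (auto simp: at_le)
  moreover have "\<forall>\<^sub>F s in at_right 0. (g s - g 0) / s \<le> f b - f a"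
    using eventually_at_right_real[OF zero_less_one]
  proof (rule eventually_mono)
    fix s :: real assume s: "s \<in> {0<..<1}"
    have "g s = f ((1 - s) *\<^sub>R a + s *\<^sub>R b)" by (simp add: g_def algebra_simps)
    also have "\<dots> \<le> (1 - s) * f a + s * f b"
      using s by (intro convex_onD[OF convex]) auto
    finally have "g s - g 0 \<le> s * (f b - f a)" by (simp add: g_def algebra_simps)
    then show "(g s - g 0) / s \<le> f b - f a" using s by (simp add: divide_le_eq mult.commute)
  qed
  ultimately have "f' (b - a) \<le> f b - f a"
    by (rule tendsto_upperbound) simp
  then show ?thesis by simp
qed

text \<open>By the mirror step, the gradient of psi - eta L at a is D psi b.\<close>

lemma mirror_step_tangent:
  fixes \<psi> L :: "'a::real_inner \<Rightarrow> real"
  assumes \<psi>_deriv: "(\<psi> has_derivative (\<lambda>h. D\<psi> a \<bullet> h)) (at a)"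
    and L_deriv: "(L has_derivative (\<lambda>h. DL a \<bullet> h)) (at a)"
    and convex: "convex_on (closed_segment a b) (\<lambda>v. \<psi> v - \<eta> * L v)"
    and step: "D\<psi> b = D\<psi> a - \<eta> *\<^sub>R DL a"
  shows "\<psi> a - \<eta> * L a + D\<psi> b \<bullet> (b - a) \<le> \<psi> b - \<eta> * L b"
proof -
  have "((\<lambda>v. \<psi> v - \<eta> * L v) has_derivative (\<lambda>h. D\<psi> a \<bullet> h - \<eta> * (DL a \<bullet> h))) (at a)"
    by (intro has_derivative_diff has_derivative_mult_right \<psi>_deriv L_deriv)
  from convex_on_closed_segment_above_tangent[OF convex this] show ?thesis
    by (simp add: step inner_diff_left)
qed

lemma mirror_step_loss_le:
  fixes \<psi> L :: "'a::real_inner \<Rightarrow> real"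
  assumes "\<eta> > 0" and "bregman \<psi> D\<psi> a b \<ge> 0"
    and "\<psi> a - \<eta> * L a + D\<psi> b \<bullet> (b - a) \<le> \<psi> b - \<eta> * L b"
  shows "L b \<le> L a"
proof -
  have "\<eta> * L b \<le> \<eta> * L a"
    using assms(2,3) by (simp add: bregman_def inner_diff_right)
  then show ?thesis using assms(1) by simp
qed

lemma mirror_step_bregman_le:
  fixes \<psi> L :: "'a::real_inner \<Rightarrow> real"
  assumes "\<eta> \<ge> 0" and L_tangent: "L a + DL a \<bullet> (u - a) \<le> L u"
    and tangent: "\<psi> a - \<eta> * L a + D\<psi> b \<bullet> (b - a) \<le> \<psi> b - \<eta> * L b"
    and step: "D\<psi> b = D\<psi> a - \<eta> *\<^sub>R DL a"
  shows "bregman \<psi> D\<psi> u b \<le> bregman \<psi> D\<psi> u a + \<eta> * (L u - L b)"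
proof -
  have "\<eta> * (L a + DL a \<bullet> (u - a)) \<le> \<eta> * L u"
    using assms(1) L_tangent by (rule mult_left_mono[rotated])
  then show ?thesis
    using tangent by (simp add: bregman_def step inner_diff_left inner_diff_right algebra_simps)
qed

lemma mirror_descent_telescope:
  fixes \<psi> L :: "'a::real_inner \<Rightarrow> real" and w :: "nat \<Rightarrow> 'a"
  assumes \<eta>: "\<eta> > 0"
    and \<psi>_deriv: "\<And>v. (\<psi> has_derivative (\<lambda>h. D\<psi> v \<bullet> h)) (at v)"
    and L_deriv: "\<And>v. (L has_derivative (\<lambda>h. DL v \<bullet> h)) (at v)"
    and bregman_nonneg: "\<And>u v. bregman \<psi> D\<psi> u v \<ge> 0"
    and L_tangent: "\<And>u v. L v + DL v \<bullet> (u - v) \<le> L u"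
    and convex: "\<And>t. convex_on (closed_segment (w t) (w (Suc t))) (\<lambda>v. \<psi> v - \<eta> * L v)"
    and step: "\<And>t. D\<psi> (w (Suc t)) = D\<psi> (w t) - \<eta> *\<^sub>R DL (w t)"
  shows "bregman \<psi> D\<psi> u (w t) + \<eta> * real t * L (w t) \<le> bregman \<psi> D\<psi> u (w 0) + \<eta> * real t * L u"
proof -
  have tangent: "\<psi> (w s) - \<eta> * L (w s) + D\<psi> (w (Suc s)) \<bullet> (w (Suc s) - w s)
      \<le> \<psi> (w (Suc s)) - \<eta> * L (w (Suc s))" for s
    by (rule mirror_step_tangent[where D\<psi> = D\<psi> and DL = DL, OF \<psi>_deriv L_deriv convex step])
  have decreasing: "L (w (Suc s)) \<le> L (w s)" for s
    by (rule mirror_step_loss_le[where \<psi> = \<psi> and D\<psi> = D\<psi>, OF \<eta> bregman_nonneg tangent])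
  have bregman_step: "bregman \<psi> D\<psi> u (w (Suc s)) \<le> bregman \<psi> D\<psi> u (w s) + \<eta> * (L u - L (w (Suc s)))" for s
    using \<eta> by (intro mirror_step_bregman_le[where L = L and DL = DL, OF _ L_tangent tangent step]) simp
  have sum: "bregman \<psi> D\<psi> u (w t) + \<eta> * (\<Sum>s<t. L (w (Suc s))) \<le> bregman \<psi> D\<psi> u (w 0) + \<eta> * real t * L u"
  proof (induction t)
    case (Suc t)
    then show ?case using bregman_step[of t] by (simp add: algebra_simps)
  qed simp
  have "real t * L (w t) \<le> (\<Sum>s<t. L (w (Suc s)))"
    using sum_mono[of "{..<t}" "\<lambda>_. L (w t)" "\<lambda>s. L (w (Suc s))"]
      lift_Suc_antimono_le[of "\<lambda>s. L (w s)", OF decreasing]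
    by (simp add: Suc_le_eq)
  then have "\<eta> * real t * L (w t) \<le> \<eta> * (\<Sum>s<t. L (w (Suc s)))"
    using \<eta> by (simp add: mult.assoc)
  then show ?thesis using sum by linarith
qed

lemma bregman_psi_nonneg: "p > 1 \<Longrightarrow> bregman (psi p) (grad_psi p) u v \<ge> 0"
  using psi_above_tangent[of p v u] by (simp add: bregman_def)

lemma bregman_psi_eq:
  "p > 0 \<Longrightarrow> bregman (psi p) (grad_psi p) u v
    = psi p u + (1 - 1 / p) * pnorm p v powr p - grad_psi p v \<bullet> u"
  by (simp add: bregman_def psi_eq_pnorm_powr grad_psi_inner_self inner_diff_right algebra_simps)

section \<open>Asymptotics of the iterates\<close>

lemma eventually_ln_ge: "\<forall>\<^sub>F t in sequentially. R \<le> ln (real t)"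
proof -
  have "\<forall>\<^sub>F t in sequentially. exp R \<le> real t"
    using eventually_ge_at_top[of "nat \<lceil>exp R\<rceil>"] by (rule eventually_mono) linarith
  then show ?thesis
    by (rule eventually_mono) (metis exp_gt_zero ln_exp ln_le_cancel_iff order_less_le_trans)
qed

text \<open>If N > kappa r then, writing N^p = N^(p-1) N, the left-hand side is at least
  (kappa r)^(p-1) delta r with delta = (1 - 1/p) kappa - 1 > 0, which outgrows M r since p > 1.\<close>

lemma powr_gap_le_imp_le_mult:
  fixes p \<kappa> M :: real
  assumes p: "p > 1" and \<kappa>: "\<kappa> > p / (p - 1)"
  obtains R where "R \<ge> 1"
    and "\<And>r N. R \<le> r \<Longrightarrow> 0 \<le> N \<Longrightarrow> (1 - 1/p) * N powr p - N powr (p - 1) * r \<le> M * r \<Longrightarrow> N \<le> \<kappa> * r"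
proof
  define \<delta> where "\<delta> = (1 - 1/p) * \<kappa> - 1"
  have \<kappa>_pos: "\<kappa> > 0" using \<kappa> p by (smt (verit) divide_pos_pos)
  have \<delta>: "\<delta> > 0" using \<kappa> p by (simp add: \<delta>_def field_simps)
  define M1 where "M1 = (\<bar>M\<bar> + 1) / (\<kappa> powr (p - 1) * \<delta>)"
  define R where "R = max 1 (M1 powr (1 / (p - 1)))"
  show "R \<ge> 1" by (simp add: R_def)
  fix r N assume r: "R \<le> r" and N: "0 \<le> N"
    and gap: "(1 - 1/p) * N powr p - N powr (p - 1) * r \<le> M * r"
  show "N \<le> \<kappa> * r"
  proof (rule ccontr)
    assume "\<not> N \<le> \<kappa> * r"
    then have N_gt: "\<kappa> * r < N" by simp
    have r1: "r \<ge> 1" using r by (simp add: R_def)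
    have "M1 = (M1 powr (1 / (p - 1))) powr (p - 1)"
      using p \<kappa>_pos \<delta> by (simp add: M1_def powr_powr)
    also have "\<dots> \<le> r powr (p - 1)"
      using r p by (intro powr_mono2) (auto simp: R_def)
    finally have M1_le: "M1 \<le> r powr (p - 1)" .
    have "(\<bar>M\<bar> + 1) * r = \<kappa> powr (p - 1) * M1 * (\<delta> * r)"
      using \<kappa>_pos \<delta> by (simp add: M1_def)
    also have "\<dots> \<le> (\<kappa> * r) powr (p - 1) * (\<delta> * r)"
      using M1_le \<kappa>_pos \<delta> r1 by (simp add: powr_mult mult_left_mono mult_right_mono)
    also have "\<dots> \<le> N powr (p - 1) * ((1 - 1/p) * N - r)"
    proof (rule mult_mono)
      show "(\<kappa> * r) powr (p - 1) \<le> N powr (p - 1)"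
        using N_gt \<kappa>_pos r1 p by (intro powr_mono2) auto
      show "\<delta> * r \<le> (1 - 1/p) * N - r"
        using N_gt p mult_strict_left_mono[OF N_gt, of "1 - 1/p"] by (simp add: \<delta>_def algebra_simps)
    qed (use \<delta> r1 in auto)
    also have "\<dots> = (1 - 1/p) * N powr p - N powr (p - 1) * r"
      using N by (simp add: powr_mult_base algebra_simps flip: powr_add)
    finally have "(\<bar>M\<bar> + 1) * r \<le> M * r" using gap by linarith
    moreover have "M * r \<le> \<bar>M\<bar> * r" using r1 by (intro mult_right_mono) auto
    ultimately show False using r1 by (simp add: distrib_right)
  qed
qed

lemma ln_lower_bound_of_exp_le:
  fixes N :: "nat \<Rightarrow> real"
  assumes C: "C > 0" and A: "A > 0"
    and le: "\<forall>\<^sub>F t in sequentially. exp (- C * N t) \<le> A * ln (real t) powr p / real t"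
  shows "\<exists>K. \<forall>\<^sub>F t in sequentially. (1 / C) * (ln (real t) - p * ln (ln (real t))) + K \<le> N t"
proof
  show "\<forall>\<^sub>F t in sequentially. (1 / C) * (ln (real t) - p * ln (ln (real t))) + (- ln A / C) \<le> N t"
    using le eventually_ln_ge[of 1]
  proof eventually_elim
    case (elim t)
    then have t: "real t > 0" by (cases "t = 0") auto
    have lnt: "ln (real t) > 0" using elim by linarith
    have "- C * N t = ln (exp (- C * N t))" by simp
    also have "\<dots> \<le> ln (A * ln (real t) powr p / real t)"
      using elim A t lnt by (subst ln_le_cancel_iff) auto
    also have "\<dots> = ln A + p * ln (ln (real t)) - ln (real t)"
      using A t lnt by (simp add: ln_mult ln_div ln_powr)
    finally have "ln (real t) - p * ln (ln (real t)) - ln A \<le> C * N t" by simp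
    then have "(ln (real t) - p * ln (ln (real t)) - ln A) / C \<le> N t"
      using C by (simp add: pos_divide_le_eq mult.commute)
    then show ?case by (simp add: diff_divide_distrib)
  qed
qed

lemma limsup_le_of_eventually_le:
  fixes f :: "nat \<Rightarrow> real"
  assumes "\<And>B. T < B \<Longrightarrow> \<forall>\<^sub>F t in sequentially. f t \<le> B"
  shows "limsup (\<lambda>t. ereal (f t)) \<le> ereal T"
proof (rule dense_ge)
  fix z assume z: "ereal T < z"
  show "limsup (\<lambda>t. ereal (f t)) \<le> z"
  proof (cases z)
    case (real B)
    then have "\<forall>\<^sub>F t in sequentially. ereal (f t) \<le> ereal B"
      using assms[of B] z by simp
    then show ?thesis unfolding real by (rule Limsup_bounded)
  qed (use z in auto)
qed

lemma exp_loss_iterate_le: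
  fixes w :: "nat \<Rightarrow> real^'d" and m :: "real^'d"
  assumes p: "p > 1" and n: "n > 0" and \<eta>: "\<eta> > 0"
    and m: "pnorm p m \<le> 1" and margin_pos: "margin n x y m > 0"
    and telescope: "\<And>u t. bregman (psi p) (grad_psi p) u (w t) + \<eta> * real t * exp_loss n x y (w t)
                        \<le> bregman (psi p) (grad_psi p) u (w 0) + \<eta> * real t * exp_loss n x y u"
  shows "\<exists>A>0. \<forall>\<^sub>F t in sequentially. exp_loss n x y (w t) \<le> A * ln (real t) powr p / real t"
proof -
  define \<gamma> c0 c1 where "\<gamma> = margin n x y m" and "c0 = grad_psi p (w 0) \<bullet> w 0 - psi p (w 0)"
    and "c1 = \<bar>grad_psi p (w 0) \<bullet> m\<bar>"
  define A where "A = 1 / p + \<bar>c0\<bar> + c1 + \<eta>"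
  have \<gamma>: "\<gamma> > 0" using margin_pos by (simp add: \<gamma>_def)
  have A: "A > 0" using p \<eta> by (simp add: A_def c1_def add_pos_nonneg)
  have "\<forall>\<^sub>F t in sequentially. exp_loss n x y (w t) \<le> A / (\<eta> * \<gamma> powr p) * ln (real t) powr p / real t"
    using eventually_ln_ge[of "max \<gamma> 1"]
  proof (rule eventually_mono)
    fix t assume lnt: "max \<gamma> 1 \<le> ln (real t)"
    then have t: "real t > 0" by (cases "t = 0") auto
    define r where "r = ln (real t) / \<gamma>"
    have r1: "r \<ge> 1" using lnt \<gamma> by (simp add: r_def)
    have "exp_loss n x y (r *\<^sub>R m) \<le> 1 / real t"
      using r1 \<gamma> by (intro exp_loss_scaleR_le_inverse[OF n _ t]) (auto simp: r_def \<gamma>_def)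
    then have comparator: "\<eta> * real t * exp_loss n x y (r *\<^sub>R m) \<le> \<eta>"
      using \<eta> t by (simp add: field_simps)
    have rp: "r \<le> r powr p" "1 \<le> r powr p"
      using powr_mono[of 1 p r] r1 p ge_one_powr_ge_zero[of r p] by auto
    have "\<eta> * real t * exp_loss n x y (w t) \<le> bregman (psi p) (grad_psi p) (r *\<^sub>R m) (w 0) + \<eta>"
      using telescope[of "r *\<^sub>R m" t] bregman_psi_nonneg[OF p, of "r *\<^sub>R m" "w t"] comparator
      by linarith
    also have "\<dots> \<le> r powr p / p + c0 + r * c1 + \<eta>"
      using bregman_scaleR_le[of r "psi p" "grad_psi p" m "w 0"] psi_scaleR_le[OF p _ m, of r] r1
      by (simp add: c0_def c1_def)
    also have "\<dots> \<le> A * r powr p"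
    proof -
      have "\<bar>c0\<bar> * 1 \<le> \<bar>c0\<bar> * r powr p" using rp(2) by (intro mult_left_mono) auto
      moreover have "r * c1 \<le> r powr p * c1" using rp(1) by (intro mult_right_mono) (auto simp: c1_def)
      moreover have "\<eta> \<le> \<eta> * r powr p" using rp(2) \<eta> by simp
      ultimately show ?thesis by (simp add: A_def algebra_simps)
    qed
    also have "\<dots> = \<eta> * real t * (A / (\<eta> * \<gamma> powr p) * ln (real t) powr p / real t)"
      using \<eta> t \<gamma> lnt by (simp add: r_def powr_divide)
    finally show "exp_loss n x y (w t) \<le> A / (\<eta> * \<gamma> powr p) * ln (real t) powr p / real t"
      by (rule mult_left_le_imp_le) (use \<eta> t in simp)
  qed
  then show ?thesis using A \<eta> \<gamma> by (intro exI[of _ "A / (\<eta> * \<gamma> powr p)"]) auto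
qed

lemma pnorm_iterate_le:
  fixes w :: "nat \<Rightarrow> real^'d" and m :: "real^'d"
  assumes p: "p > 1" and n: "n > 0" and \<eta>: "\<eta> > 0"
    and m: "pnorm p m \<le> 1" and margin_pos: "margin n x y m > 0" and \<kappa>: "\<kappa> > p / (p - 1)"
    and telescope: "\<And>u t. bregman (psi p) (grad_psi p) u (w t) + \<eta> * real t * exp_loss n x y (w t)
                        \<le> bregman (psi p) (grad_psi p) u (w 0) + \<eta> * real t * exp_loss n x y u"
  shows "\<forall>\<^sub>F t in sequentially. pnorm p (w t) \<le> \<kappa> * ln (real t) / margin n x y m"
proof -
  define \<gamma> c0 c1 where "\<gamma> = margin n x y m" and "c0 = grad_psi p (w 0) \<bullet> w 0 - psi p (w 0)"
    and "c1 = \<bar>grad_psi p (w 0) \<bullet> m\<bar>"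
  have \<gamma>: "\<gamma> > 0" using margin_pos by (simp add: \<gamma>_def)
  obtain R where R: "R \<ge> 1" and gap: "\<And>r N. R \<le> r \<Longrightarrow> 0 \<le> N \<Longrightarrow>
      (1 - 1/p) * N powr p - N powr (p - 1) * r \<le> (\<bar>c0\<bar> + c1 + \<eta>) * r \<Longrightarrow> N \<le> \<kappa> * r"
    using powr_gap_le_imp_le_mult[OF p \<kappa>] by blast
  show ?thesis
    using eventually_ln_ge[of "R * \<gamma>"]
  proof (rule eventually_mono)
    fix t assume lnt: "R * \<gamma> \<le> ln (real t)"
    define r N where "r = ln (real t) / \<gamma>" and "N = pnorm p (w t)"
    have rR: "R \<le> r" using lnt \<gamma> by (simp add: r_def pos_le_divide_eq)
    with R have r1: "r \<ge> 1" by simp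
    have t: "real t > 0" using r1 by (cases "t = 0") (auto simp: r_def)
    have "exp_loss n x y (r *\<^sub>R m) \<le> 1 / real t"
      using r1 \<gamma> by (intro exp_loss_scaleR_le_inverse[OF n _ t]) (auto simp: r_def \<gamma>_def)
    then have comparator: "\<eta> * real t * exp_loss n x y (r *\<^sub>R m) \<le> \<eta>"
      using \<eta> t by (simp add: field_simps)
    have "grad_psi p (w t) \<bullet> (r *\<^sub>R m) \<le> N powr (p - 1) * pnorm p (r *\<^sub>R m)"
      unfolding N_def by (rule grad_psi_inner_le[OF p])
    also have "\<dots> \<le> N powr (p - 1) * r"
      using m r1 p by (intro mult_left_mono) (auto simp: pnorm_scaleR mult_left_le)
    finally have "psi p (r *\<^sub>R m) + (1 - 1/p) * N powr p - N powr (p - 1) * r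
        \<le> bregman (psi p) (grad_psi p) (r *\<^sub>R m) (w t)"
      using p by (simp add: bregman_psi_eq N_def)
    also have "\<dots> \<le> bregman (psi p) (grad_psi p) (r *\<^sub>R m) (w 0) + \<eta>"
    proof -
      have "\<eta> * real t * exp_loss n x y (w t) \<ge> 0" using \<eta> t by (simp add: exp_loss_nonneg)
      then show ?thesis using telescope[of "r *\<^sub>R m" t] comparator by linarith
    qed
    also have "\<dots> \<le> psi p (r *\<^sub>R m) + c0 + r * c1 + \<eta>"
      using bregman_scaleR_le[of r "psi p" "grad_psi p" m "w 0"] r1 by (simp add: c0_def c1_def)
    finally have "(1 - 1/p) * N powr p - N powr (p - 1) * r \<le> c0 + r * c1 + \<eta>" by simp
    also have "\<dots> \<le> (\<bar>c0\<bar> + c1 + \<eta>) * r"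
    proof -
      have "\<bar>c0\<bar> * 1 \<le> \<bar>c0\<bar> * r" and "\<eta> * 1 \<le> \<eta> * r"
        using r1 \<eta> by (intro mult_left_mono; simp)+
      then show ?thesis by (simp add: algebra_simps)
    qed
    finally have "N \<le> \<kappa> * r" by (rule gap[OF rR pnorm_nonneg[of p "w t", folded N_def]])
    then show "pnorm p (w t) \<le> \<kappa> * ln (real t) / margin n x y m"
      by (simp add: N_def r_def \<gamma>_def)
  qed
qed

lemma pnorm_iterate_lower_bound:
  fixes w :: "nat \<Rightarrow> real^'d" and m :: "real^'d"
  assumes p: "p > 1" and q: "q > 1" and pq: "1/p + 1/q = 1"
    and n: "n > 0" and labels: "\<forall>i<n. y i \<in> {-1, 1}" and bounded: "\<forall>i<n. pnorm q (x i) \<le> C"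
    and \<eta>: "\<eta> > 0" and C: "C > 0"
    and m: "pnorm p m \<le> 1" and margin_pos: "margin n x y m > 0"
    and telescope: "\<And>u t. bregman (psi p) (grad_psi p) u (w t) + \<eta> * real t * exp_loss n x y (w t)
                        \<le> bregman (psi p) (grad_psi p) u (w 0) + \<eta> * real t * exp_loss n x y u"
  shows "\<exists>K. \<forall>\<^sub>F t in sequentially. (1 / C) * (ln (real t) - p * ln (ln (real t))) + K \<le> pnorm p (w t)"
proof -
  obtain A where A: "A > 0"
    and loss: "\<forall>\<^sub>F t in sequentially. exp_loss n x y (w t) \<le> A * ln (real t) powr p / real t"
    using exp_loss_iterate_le[OF p n \<eta> m margin_pos telescope] by blast
  have "\<forall>\<^sub>F t in sequentially. exp (- C * pnorm p (w t)) \<le> (real n * A) * ln (real t) powr p / real t"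
    using loss
  proof (rule eventually_mono)
    fix t assume loss_t: "exp_loss n x y (w t) \<le> A * ln (real t) powr p / real t"
    have "exp (- C * pnorm p (w t)) \<le> real n * exp_loss n x y (w t)"
      using exp_loss_ge_exp_pnorm[OF p q pq n labels bounded, of "w t"] n
      by (simp add: divide_le_eq mult.commute)
    also have "\<dots> \<le> real n * (A * ln (real t) powr p / real t)"
      using loss_t by (intro mult_left_mono) auto
    finally show "exp (- C * pnorm p (w t)) \<le> (real n * A) * ln (real t) powr p / real t"
      by simp
  qed
  then show ?thesis using C A n by (intro ln_lower_bound_of_exp_le) auto
qed

lemma limsup_pnorm_iterate_le:
  fixes w :: "nat \<Rightarrow> real^'d"
  assumes p: "p > 1" and n: "n > 0" and \<eta>: "\<eta> > 0" and \<gamma>: "\<gamma> > 0"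
    and approx: "\<And>\<gamma>'. \<gamma>' < \<gamma> \<Longrightarrow> \<exists>m. pnorm p m \<le> 1 \<and> \<gamma>' < margin n x y m"
    and telescope: "\<And>u t. bregman (psi p) (grad_psi p) u (w t) + \<eta> * real t * exp_loss n x y (w t)
                        \<le> bregman (psi p) (grad_psi p) u (w 0) + \<eta> * real t * exp_loss n x y u"
  shows "limsup (\<lambda>t. ereal (pnorm p (w t) / ln (real t))) \<le> ereal ((1 / \<gamma>) * (p / (p - 1)))"
proof (rule limsup_le_of_eventually_le)
  fix B assume B: "(1 / \<gamma>) * (p / (p - 1)) < B"
  have "0 < (1 / \<gamma>) * (p / (p - 1))" using p \<gamma> by simp
  with B have B_pos: "B > 0" by linarith
  have "p / ((p - 1) * B) < \<gamma>" using B B_pos \<gamma> p by (simp add: field_simps)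
  then obtain m where m: "pnorm p m \<le> 1" and m_margin: "p / ((p - 1) * B) < margin n x y m"
    using approx by blast
  have "0 < p / ((p - 1) * B)" using p B_pos by simp
  with m_margin have margin_pos: "margin n x y m > 0" by linarith
  have "B * margin n x y m > p / (p - 1)"
    using m_margin B_pos p by (simp add: field_simps)
  from pnorm_iterate_le[OF p n \<eta> m margin_pos this telescope]
  show "\<forall>\<^sub>F t in sequentially. pnorm p (w t) / ln (real t) \<le> B"
    using eventually_ln_ge[of 1]
  proof eventually_elim
    case (elim t)
    then show ?case using margin_pos by (simp add: pos_divide_le_eq)
  qed
qed

theorem lemma5:
  fixes p q C \<eta> :: real and n :: nat
    and x :: "nat \<Rightarrow> real^'d" and y :: "nat \<Rightarrow> real"
    and w :: "nat \<Rightarrow> real^'d"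
  assumes p_gt: "p > 1"
    and pq: "1 / p + 1 / q = 1"
    and n_pos: "n > 0"
    and labels: "\<forall>i<n. y i \<in> {-1, 1}"
    and separable: "\<exists>u. \<forall>i<n. y i * (u \<bullet> x i) > 0"
    and bounded: "\<forall>i<n. pnorm q (x i) \<le> C"
    and eta_pos: "\<eta> > 0"
    and local_convex: "\<forall>t. convex_on (closed_segment (w t) (w (Suc t)))
                               (\<lambda>v. psi p v - \<eta> * exp_loss n x y v)"
    and pGD: "\<forall>t. grad_psi p (w (Suc t)) = grad_psi p (w t) - \<eta> *\<^sub>R grad_exp_loss n x y (w t)"
  shows "(\<exists>K. \<forall>\<^sub>F t in sequentially.
            pnorm p (w t) \<ge> (1 / C) * (ln (real t) - p * ln (ln (real t))) + K)
      \<and> limsup (\<lambda>t. ereal (pnorm p (w t) / ln (real t)))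
          \<le> ereal ((1 / max_margin p n x y) * (p / (p - 1)))"
proof -
  have q: "q > 1" using conjugate_exponent_gt_one[OF p_gt pq] .
  have telescope: "\<And>u t. bregman (psi p) (grad_psi p) u (w t) + \<eta> * real t * exp_loss n x y (w t)
                        \<le> bregman (psi p) (grad_psi p) u (w 0) + \<eta> * real t * exp_loss n x y u"
    by (rule mirror_descent_telescope[where \<psi> = "psi p" and D\<psi> = "grad_psi p" and L = "exp_loss n x y" and DL = "grad_exp_loss n x y"
          and w = w, OF eta_pos psi_has_derivative[OF p_gt] exp_loss_has_derivative
          bregman_psi_nonneg[OF p_gt] exp_loss_above_tangent local_convex[rule_format] pGD[rule_format]])
  have "p > 0" using p_gt by simp
  then obtain m where m: "pnorm p m \<le> 1" and margin_pos: "margin n x y m > 0"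
    using exists_unit_margin_pos[OF _ n_pos separable] by blast
  have C: "C > 0"
    using margin_le_of_pnorm_le[OF p_gt q pq n_pos labels bounded m] margin_pos by linarith
  have \<gamma>: "max_margin p n x y > 0"
    using margin_le_max_margin[OF p_gt q pq n_pos labels bounded m] margin_pos by linarith
  have "\<exists>K. \<forall>\<^sub>F t in sequentially. (1 / C) * (ln (real t) - p * ln (ln (real t))) + K \<le> pnorm p (w t)"
    by (rule pnorm_iterate_lower_bound[OF p_gt q pq n_pos labels bounded eta_pos C m margin_pos telescope])
  moreover have "limsup (\<lambda>t. ereal (pnorm p (w t) / ln (real t)))
      \<le> ereal ((1 / max_margin p n x y) * (p / (p - 1)))"
    by (rule limsup_pnorm_iterate_le[OF p_gt n_pos eta_pos \<gamma>
          exists_margin_gt[OF p_gt q pq n_pos labels bounded] telescope])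
  ultimately show ?thesis ..
qed

end
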